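(* Let $c,k_1,k_2,k_3,k_4$ be real constants with $k_1\neq0$, and let $F$ be a smooth function of $x$ on an interval satisfying identically $$\Big(F(x)+\frac{k_3}{2}\Big)\Big(F(x)+\frac{c}{k_1}x+\frac{k_2}{k_1}-k_3\Big)^2=k_4.$$ Then for $V(x,y)=cy+F(x)$ the function $$J=k_1\dot x^3+\dot x^2\dot y+\big(3k_1F(x)+cx+k_2\big)\dot x+\big(2F(x)+k_3\big)\dot y$$ is a first integral of $\ddot x=-V_{,x}$, $\ddot y=-V_{,y}$.
   Context: A first integral is a function of $(t,x,y,\dot x,\dot y)$ whose total time derivative vanishes along every solution of the given equations of motion. *)

theory Defs
  imports "HOL-Analysis.Analysis"
begin

definition pot :: "real \<Rightarrow> (real \<Rightarrow> real) \<Rightarrow> real \<Rightarrow> real \<Rightarrow> real" where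
  "pot c F x y = c * y + F x"

definition Jfun :: "real \<Rightarrow> real \<Rightarrow> real \<Rightarrow> real \<Rightarrow> (real \<Rightarrow> real)
                    \<Rightarrow> real \<Rightarrow> real \<Rightarrow> real \<Rightarrow> real \<Rightarrow> real" where
  "Jfun c k1 k2 k3 F x y xd yd =
     k1 * xd ^ 3 + xd ^ 2 * yd + (3 * k1 * F x + c * x + k2) * xd + (2 * F x + k3) * yd"

end

theory Submission
  imports Defs
begin

text \<open>Along a trajectory the accelerations eliminate all velocity terms from \<open>dJ/dt\<close>, leaving
  \<open>-((3 k\<^sub>1 F + c x + k\<^sub>2) F' + c (2F + k\<^sub>3))\<close>. With \<open>G = F + (c/k\<^sub>1) x + k\<^sub>2/k\<^sub>1 - k\<^sub>3\<close> this
  bracket is \<open>k\<^sub>1 (F' G + (2F + k\<^sub>3) G')\<close>, and \<open>G\<close> times it is \<open>k\<^sub>1\<close> times the derivative of the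
  constant \<open>(F + k\<^sub>3/2) G\<^sup>2 = k\<^sub>4\<close>. So the bracket vanishes where \<open>G \<noteq> 0\<close>. At a zero of \<open>G\<close> with
  \<open>F \<noteq> -k\<^sub>3/2\<close> the constant \<open>k\<^sub>4\<close> is \<open>0\<close>, so \<open>G\<close> vanishes on a neighbourhood and \<open>G' = 0\<close>.\<close>

lemma mult_square_constant_imp_deriv_eq_0:
  fixes f g f' g' :: "real \<Rightarrow> real"
  assumes S: "open S" "u \<in> S"
    and const: "\<forall>v\<in>S. f v * (g v)\<^sup>2 = k"
    and df: "\<And>v. v \<in> S \<Longrightarrow> (f has_real_derivative f' v) (at v)"
    and dg: "\<And>v. v \<in> S \<Longrightarrow> (g has_real_derivative g' v) (at v)"
  shows "f' u * g u + 2 * f u * g' u = 0"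
proof (cases "g u = 0 \<and> f u \<noteq> 0")
  case False
  have "((\<lambda>v. f v * (g v)\<^sup>2) has_real_derivative f' u * (g u)\<^sup>2 + f u * (2 * g u * g' u)) (at u)"
    using df[OF S(2)] dg[OF S(2)] by (auto intro!: derivative_eq_intros)
  moreover have "((\<lambda>v. f v * (g v)\<^sup>2) has_real_derivative 0) (at u)"
    by (rule has_field_derivative_transform_within_open[where f="\<lambda>_. k" and S=S])
      (use S const in auto)
  ultimately have "f' u * (g u)\<^sup>2 + f u * (2 * g u * g' u) = 0"
    by (rule DERIV_unique)
  then have "g u * (f' u * g u + 2 * f u * g' u) = 0"
    by (simp add: algebra_simps power2_eq_square)
  then show ?thesis
    using False by auto
next
  case True
  define S' where "S' = f -` (- {0}) \<inter> S"
  have "continuous_on S f"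
    using df by (meson DERIV_isCont continuous_at_imp_continuous_on)
  then have "open S'"
    unfolding S'_def using S(1) continuous_on_open_vimage open_Compl[OF closed_singleton] by blast
  moreover have "u \<in> S'"
    using True S(2) by (simp add: S'_def)
  moreover have "g v = 0" if "v \<in> S'" for v
  proof -
    have "k = 0"
      using const S(2) True by auto
    then show ?thesis
      using const that by (auto simp: S'_def)
  qed
  ultimately have "((\<lambda>_. 0) has_real_derivative g' u) (at u)"
    by (intro has_field_derivative_transform_within_open[OF dg[OF S(2)]]) auto
  then have "g' u = 0"
    using DERIV_unique DERIV_const by blast
  then show ?thesis
    using True by simp
qed

lemma cubic_integral_identity:
  fixes F :: "real \<Rightarrow> real"
  assumes k1: "k1 \<noteq> 0" and I: "open I" "u \<in> I"
    and dF: "\<And>v. v \<in> I \<Longrightarrow> (F has_real_derivative deriv F v) (at v)"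
    and ident: "\<forall>v\<in>I. (F v + k3 / 2) * (F v + c / k1 * v + k2 / k1 - k3) ^ 2 = k4"
  shows "(3 * k1 * F u + c * u + k2) * deriv F u + c * (2 * F u + k3) = 0"
proof -
  have "deriv F u * (F u + c / k1 * u + k2 / k1 - k3) + 2 * (F u + k3 / 2) * (deriv F u + c / k1) = 0"
    by (rule mult_square_constant_imp_deriv_eq_0[OF I ident])
      (use dF k1 in \<open>auto intro!: derivative_eq_intros\<close>)
  moreover have "k1 * (deriv F u * (F u + c / k1 * u + k2 / k1 - k3)
      + 2 * (F u + k3 / 2) * (deriv F u + c / k1))
      = (3 * k1 * F u + c * u + k2) * deriv F u + c * (2 * F u + k3)"
    using k1 by (simp add: field_simps)
  ultimately show ?thesis
    by simp
qed

lemma Jfun_has_derivative_along_trajectory: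
  assumes dF: "(F has_real_derivative F') (at (x t))"
    and dx: "(x has_real_derivative xd t) (at t)"
    and dy: "(y has_real_derivative yd t) (at t)"
    and ddx: "(xd has_real_derivative - F') (at t)"
    and ddy: "(yd has_real_derivative - c) (at t)"
  shows "((\<lambda>s. Jfun c k1 k2 k3 F (x s) (y s) (xd s) (yd s)) has_real_derivative
      - ((3 * k1 * F (x t) + c * x t + k2) * F' + c * (2 * F (x t) + k3))) (at t)"
proof -
  have dFx: "((\<lambda>s. F (x s)) has_real_derivative F' * xd t) (at t)"
    using DERIV_chain2[OF dF dx] .
  show ?thesis
    unfolding Jfun_def
    by (rule derivative_eq_intros dFx ddx ddy dx dy | simp)+
      (simp add: algebra_simps power2_eq_square power3_eq_cube)
qed

lemma deriv_pot_first:
  assumes "(F has_real_derivative F') (at u)"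
  shows "deriv (\<lambda>u. pot c F u v) u = F'"
  unfolding pot_def using assms by (auto intro!: DERIV_imp_deriv derivative_eq_intros)

lemma deriv_pot_second: "deriv (\<lambda>v. pot c F u v) v = c"
  unfolding pot_def by (auto intro!: DERIV_imp_deriv derivative_eq_intros)

theorem mainTheorem12:
  fixes c k1 k2 k3 k4 :: real and F :: "real \<Rightarrow> real" and I T :: "real set"
    and x y xd yd :: "real \<Rightarrow> real"
  assumes k1: "k1 \<noteq> 0"
    and I: "is_interval I" "open I"
    and Fsmooth: "\<forall>n. \<forall>u\<in>I. (deriv ^^ n) F differentiable (at u)"
    and ident: "\<forall>u\<in>I. (F u + k3 / 2) * (F u + c / k1 * u + k2 / k1 - k3) ^ 2 = k4"
    and T: "is_interval T" "open T"
    and xT: "\<forall>t\<in>T. x t \<in> I"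
    and dx: "\<forall>t\<in>T. (x has_real_derivative xd t) (at t)"
    and dy: "\<forall>t\<in>T. (y has_real_derivative yd t) (at t)"
    and ddx: "\<forall>t\<in>T. (xd has_real_derivative - deriv (\<lambda>u. pot c F u (y t)) (x t)) (at t)"
    and ddy: "\<forall>t\<in>T. (yd has_real_derivative - deriv (\<lambda>v. pot c F (x t) v) (y t)) (at t)"
  shows "\<forall>t\<in>T. ((\<lambda>s. Jfun c k1 k2 k3 F (x s) (y s) (xd s) (yd s)) has_real_derivative 0) (at t)"
proof
  fix t assume t: "t \<in> T"
  have dF: "(F has_real_derivative deriv F u) (at u)" if "u \<in> I" for u
    using Fsmooth that DERIV_deriv_iff_real_differentiable by (metis funpow_0)
  have xI: "x t \<in> I"
    using xT t by blast
  have "((\<lambda>s. Jfun c k1 k2 k3 F (x s) (y s) (xd s) (yd s)) has_real_derivative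
      - ((3 * k1 * F (x t) + c * x t + k2) * deriv F (x t) + c * (2 * F (x t) + k3))) (at t)"
    using dF[OF xI] dx dy ddx ddy t
    by (intro Jfun_has_derivative_along_trajectory) (auto simp: deriv_pot_first deriv_pot_second)
  then show "((\<lambda>s. Jfun c k1 k2 k3 F (x s) (y s) (xd s) (yd s)) has_real_derivative 0) (at t)"
    using cubic_integral_identity[OF k1 I(2) xI dF ident] by simp
qed

end
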